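(* Let $\mathcal{L}\subseteq\mathcal{L}_c$ be a class of latency functions and consider a parallel-link network with $n=2$ links, unit demand and $\ell_1,\ell_2\in\mathcal{L}$. Let $x^*$ be an optimal flow. If there is $i\in\{1,2\}$ with $x_i(0)>x^*_i$ and $x_i(0)\le\frac12$, then $$C(x(0))\le \frac{1}{1-\mu_1(\mathcal{L})/2}\,C(x^* ).$$
   Context: $\mathcal{L}_c$: strictly increasing, convex, continuously differentiable functions $\mathbb{R}_+\to\mathbb{R}_+$. Flows $x\in\mathbb{R}^2_+$ with $x_1+x_2=1$; $C(x)=\sum_i\ell_i(x_i)x_i$; $x^*$ minimizes $C$ over flows. $x(0)$ is the (untolled) Wardrop equilibrium: for all $i,j$ with $x_i>0$, $\ell_i(x_i)\le\ell_j(x_j)$. For $\ell\in\mathcal{L}$ define $\mu_1(\ell)=\sup_{x,x^*\ge0}\frac{(\ell(x)-\ell(x^* ))\,x^*}{\ell(x)\,x}$, and $\mu_1(\mathcal{L})=\sup_{\ell\in\mathcal{L}}\mu_1(\ell)$ (which lies in $[0,1]$). *)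

theory Defs
  imports "HOL-Analysis.Analysis"
begin

definition Lc :: "(real \<Rightarrow> real) set" where
  "Lc = {l. strict_mono_on {0..} l \<and> convex_on {0..} l \<and> (\<forall>x\<ge>0. l x \<ge> 0) \<and>
          (\<exists>l'. continuous_on {0..} l' \<and>
                (\<forall>x\<ge>0. (l has_real_derivative l' x) (at x within {0..})))}"

definition mu1 :: "(real \<Rightarrow> real) \<Rightarrow> real" where
  "mu1 l = Sup {(l x - l xs) * xs / (l x * x) | x xs. x \<ge> 0 \<and> xs \<ge> 0}"

definition mu1_class :: "(real \<Rightarrow> real) set \<Rightarrow> real" where
  "mu1_class L = (SUP l\<in>L. mu1 l)"

definition is_flow :: "(nat \<Rightarrow> real) \<Rightarrow> bool" where
  "is_flow x \<longleftrightarrow> x 1 \<ge> 0 \<and> x 2 \<ge> 0 \<and> x 1 + x 2 = 1"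

definition cost :: "(nat \<Rightarrow> real \<Rightarrow> real) \<Rightarrow> (nat \<Rightarrow> real) \<Rightarrow> real" where
  "cost l x = (\<Sum>i\<in>{1,2}. l i (x i) * x i)"

definition wardrop :: "(nat \<Rightarrow> real \<Rightarrow> real) \<Rightarrow> (nat \<Rightarrow> real) \<Rightarrow> bool" where
  "wardrop l x \<longleftrightarrow> is_flow x \<and>
     (\<forall>i\<in>{1,2}. \<forall>j\<in>{1,2::nat}. x i > 0 \<longrightarrow> l i (x i) \<le> l j (x j))"

definition optimal :: "(nat \<Rightarrow> real \<Rightarrow> real) \<Rightarrow> (nat \<Rightarrow> real) \<Rightarrow> bool" where
  "optimal l x \<longleftrightarrow> is_flow x \<and> (\<forall>y. is_flow y \<longrightarrow> cost l x \<le> cost l y)"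

end

theory Submission
  imports Defs
begin

text \<open>At the equilibrium both links carry flow (the overloaded link \<open>i\<close> has \<open>x\<^sub>i(0) > x\<^sup>*\<^sub>i \<ge> 0\<close>
  and the other one at least \<open>1/2\<close>), so they share a common latency \<open>L\<close> and \<open>C(x(0)) = L\<close>.
  On link \<open>i\<close> the definition of \<open>\<mu>\<^sub>1\<close> gives
  \<open>\<ell>\<^sub>i(x\<^sup>*\<^sub>i) x\<^sup>*\<^sub>i \<ge> L x\<^sup>*\<^sub>i - \<mu>\<^sub>1 L x\<^sub>i(0) \<ge> L x\<^sup>*\<^sub>i - \<mu>\<^sub>1 L / 2\<close>, and on the other link,
  which the optimum loads more, monotonicity gives \<open>\<ell>\<^sub>j(x\<^sup>*\<^sub>j) x\<^sup>*\<^sub>j \<ge> L x\<^sup>*\<^sub>j\<close>.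
  Adding up, \<open>C(x\<^sup>*) \<ge> (1 - \<mu>\<^sub>1/2) L\<close>.\<close>

lemma Lc_nonneg: "l \<in> Lc \<Longrightarrow> 0 \<le> x \<Longrightarrow> 0 \<le> l x"
  unfolding Lc_def by auto

lemma Lc_mono: "l \<in> Lc \<Longrightarrow> 0 \<le> x \<Longrightarrow> x \<le> y \<Longrightarrow> l x \<le> l y"
  unfolding Lc_def using strict_mono_on_leD by fastforce

lemma mu1_quotient_le_one:
  fixes l :: "real \<Rightarrow> real"
  assumes nonneg: "\<And>z. 0 \<le> z \<Longrightarrow> 0 \<le> l z" and mono: "mono_on {0..} l"
    and "0 \<le> x" "0 \<le> y"
  shows "(l x - l y) * y / (l x * x) \<le> 1"
proof -
  have "(l x - l y) * y \<le> l x * x"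
  proof (cases "x \<le> y")
    case True
    then have "l x - l y \<le> 0" using mono_onD[OF mono, of x y] assms(3,4) by simp
    then show ?thesis using assms nonneg[of x] by (smt (verit) mult_nonneg_nonneg mult_nonpos_nonneg)
  next
    case False
    have "(l x - l y) * y \<le> l x * y" using nonneg[of y] assms(4) by (simp add: mult_right_mono)
    also have "\<dots> \<le> l x * x" using False nonneg[of x] assms(3) by (simp add: mult_left_mono)
    finally show ?thesis .
  qed
  then show ?thesis
    using nonneg[of x] assms(3) by (cases "l x * x = 0") (auto simp: divide_le_eq)
qed

lemma Lc_mu1_quotient_le_one:
  "l \<in> Lc \<Longrightarrow> 0 \<le> x \<Longrightarrow> 0 \<le> y \<Longrightarrow> (l x - l y) * y / (l x * x) \<le> 1"
  by (rule mu1_quotient_le_one) (auto simp: mono_on_def intro: Lc_nonneg Lc_mono)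

lemma mu1_upper:
  assumes "l \<in> Lc" "0 \<le> x" "0 \<le> y"
  shows "(l x - l y) * y / (l x * x) \<le> mu1 l"
proof -
  have "bdd_above {(l x - l xs) * xs / (l x * x) | x xs. 0 \<le> x \<and> 0 \<le> xs}"
    using Lc_mu1_quotient_le_one[OF assms(1)] by (auto simp: bdd_above_def)
  then show ?thesis
    unfolding mu1_def by (rule cSup_upper[rotated]) (use assms(2,3) in blast)
qed

lemma mu1_le_one: "l \<in> Lc \<Longrightarrow> mu1 l \<le> 1"
  unfolding mu1_def by (rule cSup_least) (auto intro: Lc_mu1_quotient_le_one)

lemma mu1_nonneg: "l \<in> Lc \<Longrightarrow> 0 \<le> mu1 l"
  using mu1_upper[of l 1 1] by simp

lemma mu1_mult_bound:
  assumes "l \<in> Lc" "0 \<le> x" "0 \<le> y"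
  shows "(l x - l y) * y \<le> mu1 l * (l x * x)"
proof (cases "l x * x = 0")
  case True
  have "l x \<le> l y"
  proof (cases "x \<le> y")
    case False
    then have "l x = 0" using True assms(3) by simp
    then show ?thesis using Lc_nonneg[OF assms(1,3)] by simp
  qed (use Lc_mono[OF assms(1,2)] in simp)
  then have "(l x - l y) * y \<le> 0" using assms(3) by (simp add: mult_nonpos_nonneg)
  then show ?thesis unfolding True by simp
next
  case False
  then have "0 < l x * x" using assms Lc_nonneg[of l x] by simp
  then show ?thesis using mu1_upper[OF assms] by (simp add: divide_le_eq mult.commute)
qed

lemma mu1_le_mu1_class: "L \<subseteq> Lc \<Longrightarrow> l \<in> L \<Longrightarrow> mu1 l \<le> mu1_class L"
  unfolding mu1_class_def
  by (rule cSUP_upper) (auto simp: bdd_above_def intro: mu1_le_one)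

lemma mu1_class_le_one: "L \<subseteq> Lc \<Longrightarrow> L \<noteq> {} \<Longrightarrow> mu1_class L \<le> 1"
  unfolding mu1_class_def by (rule cSUP_least) (auto intro: mu1_le_one)

lemma two_link_equilibrium_bound:
  assumes la: "la \<in> Lc" and lb: "lb \<in> Lc"
    and flows: "as < a0" "0 \<le> as" "a0 \<le> 1/2" "a0 + b0 = 1" "as + bs = 1"
    and equal_latency: "la a0 = lb b0"
    and M: "mu1 la \<le> M" "M < 2"
  shows "la a0 * a0 + lb b0 * b0 \<le> 1 / (1 - M/2) * (la as * as + lb bs * bs)"
proof -
  define L where "L = la a0"
  have "0 \<le> L" using Lc_nonneg[OF la] flows L_def by simp
  have cost0: "la a0 * a0 + lb b0 * b0 = L"
    using equal_latency flows(4) L_def by (simp flip: distrib_left)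
  have "L * as - la as * as \<le> mu1 la * (L * a0)"
    using mu1_mult_bound[OF la, of a0 as] flows L_def by (simp add: algebra_simps)
  also have "\<dots> \<le> M * (L / 2)"
    using M(1) mu1_nonneg[OF la] \<open>0 \<le> L\<close> mult_left_mono[of a0 "1/2" L] flows
    by (intro mult_mono) auto
  finally have link_a: "L * as - M * (L / 2) \<le> la as * as" by simp
  have "L \<le> lb bs"
    using Lc_mono[OF lb, of b0 bs] flows equal_latency L_def by simp
  then have link_b: "L * bs \<le> lb bs * bs" using flows by (simp add: mult_right_mono)
  have "L = L * as + L * bs" using flows(5) by (simp flip: distrib_left)
  then have "L * (1 - M/2) \<le> la as * as + lb bs * bs"
    using link_a link_b by (simp add: algebra_simps)
  then show ?thesis using cost0 M(2) by (simp add: field_simps)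
qed

theorem mainTheorem10:
  fixes L :: "(real \<Rightarrow> real) set" and l :: "nat \<Rightarrow> real \<Rightarrow> real"
    and x0 xs :: "nat \<Rightarrow> real" and i :: nat
  assumes "L \<subseteq> Lc" and "l 1 \<in> L" and "l 2 \<in> L"
    and "wardrop l x0" and "optimal l xs"
    and "i \<in> {1,2}" and "x0 i > xs i" and "x0 i \<le> 1/2"
  shows "cost l x0 \<le> 1 / (1 - mu1_class L / 2) * cost l xs"
proof -
  have flows: "is_flow x0" "is_flow xs"
    using assms(4,5) unfolding wardrop_def optimal_def by simp_all
  have "l i \<in> L" using assms(2,3,6) by auto
  then have M: "mu1 (l i) \<le> mu1_class L" "mu1_class L < 2"
    using mu1_le_mu1_class[OF assms(1)] mu1_class_le_one[OF assms(1)] by fastforce+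
  define j where "j = 3 - i"
  have ij: "{i, j} = {1, 2}" "j \<noteq> i" using assms(6) unfolding j_def by auto
  then have cost_ij: "cost l = (\<lambda>x. l i (x i) * x i + l j (x j) * x j)"
    unfolding cost_def by (auto simp: fun_eq_iff doubleton_eq_iff)
  have flow_ij: "x0 i + x0 j = 1" "xs i + xs j = 1" "0 \<le> xs i"
    using flows ij by (auto simp: is_flow_def doubleton_eq_iff)
  have "0 < x0 i" "0 < x0 j"
    using assms(7,8) flow_ij by linarith+
  then have "l i (x0 i) = l j (x0 j)"
    using assms(4) ij(1) unfolding wardrop_def by (metis insertI1 insertI2 order_antisym)
  moreover have "l i \<in> Lc" "l j \<in> Lc" using assms(1-3) ij(1) by (auto simp: doubleton_eq_iff)
  ultimately show ?thesis
    unfolding cost_ij using two_link_equilibrium_bound M flow_ij assms(7,8) by simp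
qed

end
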